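(* Every ultra-metric space is isometric to a closed subset of an ultra-normed Boolean group (equipped with the metric $(u,v)\mapsto\|u-v\|$).
   Context: An ultra-metric satisfies $d(x,z)\le\max\{d(x,y),d(y,z)\}$. A Boolean group is a group in which every non-identity element has order 2. An ultra-norm on an abelian group is a function $\|\cdot\|\ge0$ with $\|0\|=0$, $\|-u\|=\|u\|$, $\|u+v\|\le\max\{\|u\|,\|v\|\}$ and $\|u\|=0$ only for $u=0$. *)

theory Defs
  imports "HOL-Analysis.Abstract_Metric_Spaces" "HOL-Algebra.Multiplicative_Group"
begin

definition ultrametric_space :: "'a set \<Rightarrow> ('a \<Rightarrow> 'a \<Rightarrow> real) \<Rightarrow> bool" where
  "ultrametric_space X d \<longleftrightarrow> Metric_space X d \<and>
     (\<forall>x\<in>X. \<forall>y\<in>X. \<forall>z\<in>X. d x z \<le> max (d x y) (d y z))"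

definition boolean_group :: "('b, 'c) monoid_scheme \<Rightarrow> bool" where
  "boolean_group G \<longleftrightarrow> group G \<and>
     (\<forall>x\<in>carrier G. x \<noteq> \<one>\<^bsub>G\<^esub> \<longrightarrow> group.ord G x = 2)"

definition ultra_norm :: "('b, 'c) monoid_scheme \<Rightarrow> ('b \<Rightarrow> real) \<Rightarrow> bool" where
  "ultra_norm G N \<longleftrightarrow> comm_group G \<and>
     (\<forall>u\<in>carrier G. N u \<ge> 0) \<and>
     N \<one>\<^bsub>G\<^esub> = 0 \<and>
     (\<forall>u\<in>carrier G. N (inv\<^bsub>G\<^esub> u) = N u) \<and>
     (\<forall>u\<in>carrier G. \<forall>v\<in>carrier G. N (u \<otimes>\<^bsub>G\<^esub> v) \<le> max (N u) (N v)) \<and>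
     (\<forall>u\<in>carrier G. N u = 0 \<longrightarrow> u = \<one>\<^bsub>G\<^esub>)"

definition norm_dist :: "('b, 'c) monoid_scheme \<Rightarrow> ('b \<Rightarrow> real) \<Rightarrow> 'b \<Rightarrow> 'b \<Rightarrow> real" where
  "norm_dist G N u v = N (u \<otimes>\<^bsub>G\<^esub> inv\<^bsub>G\<^esub> v)"

end

theory Submission
  imports Defs
begin

text \<open>Take the group of finite subsets of X of even cardinality under symmetric difference.
In an ultrametric space the closed balls of a fixed radius partition X, so a set A can be normed
by the least radius from which on every ball contains an even number of points of A; evenness in
balls survives symmetric differences, which gives the ultrametric inequality. For a base point
x0 the map sending x to the symmetric difference of {x} and {x0} is an isometry, because {x, y}
becomes even in balls exactly at radius d x y. A set A off the image differs from {x0} by a set C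
with at least two points; for each x the symmetric difference of C and {x} contains a point
whose distance to all its other points is at least the separation m of C, so A stays at
distance m from the image.\<close>

definition even_subsets :: "'a set \<Rightarrow> 'a set set" where
  "even_subsets X = {A. finite A \<and> A \<subseteq> X \<and> even (card A)}"

definition even_part :: "'a set \<Rightarrow> 'a set \<Rightarrow> 'a set" where
  "even_part X A = (if A \<in> even_subsets X then A else {})"

text \<open>Arguments outside the carrier are read as the identity: this pins down the inverse
outside the carrier and makes norm_dist nonnegative and symmetric on all arguments,
as the locale Metric_space demands.\<close>

definition even_subsets_group :: "'a set \<Rightarrow> 'a set monoid" where
  "even_subsets_group X =
     \<lparr>carrier = even_subsets X, mult = (\<lambda>A B. sym_diff (even_part X A) (even_part X B)), one = {}\<rparr>"

lemma even_card_sym_diff: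
  assumes "finite A" "finite B" "even (card A)" "even (card B)"
  shows "even (card (sym_diff A B))"
proof -
  have sym_diff_eq: "sym_diff A B = (A \<union> B) - (A \<inter> B)" by blast
  have "card (sym_diff A B) = card (A \<union> B) - card (A \<inter> B)"
    unfolding sym_diff_eq using assms by (subst card_Diff_subset) auto
  moreover have "card A + card B = card (A \<union> B) + card (A \<inter> B)"
    using assms card_Un_Int by blast
  moreover have "card (A \<inter> B) \<le> card (A \<union> B)"
    using assms by (intro card_mono) auto
  ultimately show ?thesis using assms by presburger
qed

lemma empty_in_even_subsets [simp]: "{} \<in> even_subsets X"
  by (simp add: even_subsets_def)

lemma sym_diff_in_even_subsets:
  "A \<in> even_subsets X \<Longrightarrow> B \<in> even_subsets X \<Longrightarrow> sym_diff A B \<in> even_subsets X"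
  unfolding even_subsets_def using even_card_sym_diff[of A B] by auto

lemma even_part_in_even_subsets: "even_part X A \<in> even_subsets X"
  by (simp add: even_part_def)

lemma carrier_even_subsets_group [simp]: "carrier (even_subsets_group X) = even_subsets X"
  by (simp add: even_subsets_group_def)

lemma one_even_subsets_group [simp]: "\<one>\<^bsub>even_subsets_group X\<^esub> = {}"
  by (simp add: even_subsets_group_def)

lemma mult_even_subsets_group:
  "A \<in> even_subsets X \<Longrightarrow> B \<in> even_subsets X \<Longrightarrow> A \<otimes>\<^bsub>even_subsets_group X\<^esub> B = sym_diff A B"
  by (simp add: even_subsets_group_def even_part_def)

lemma comm_group_even_subsets_group: "comm_group (even_subsets_group X)"
proof (rule comm_groupI)
  fix A B C
  assume "A \<in> carrier (even_subsets_group X)" "B \<in> carrier (even_subsets_group X)"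
    "C \<in> carrier (even_subsets_group X)"
  then show "A \<otimes>\<^bsub>even_subsets_group X\<^esub> B \<otimes>\<^bsub>even_subsets_group X\<^esub> C =
      A \<otimes>\<^bsub>even_subsets_group X\<^esub> (B \<otimes>\<^bsub>even_subsets_group X\<^esub> C)"
    by (simp add: mult_even_subsets_group sym_diff_in_even_subsets) blast
qed (auto simp: mult_even_subsets_group sym_diff_in_even_subsets even_subsets_group_def even_part_def)

lemma group_even_subsets_group: "group (even_subsets_group X)"
  using comm_group_even_subsets_group comm_group.axioms(2) by blast

lemma inv_even_subsets_group:
  "inv\<^bsub>even_subsets_group X\<^esub> A = even_part X A"
proof (cases "A \<in> even_subsets X")
  case True
  then show ?thesis
    by (intro group.inv_equality[OF group_even_subsets_group])
      (auto simp: even_subsets_group_def even_part_def)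
next
  case False
  then show ?thesis
    unfolding m_inv_def by (intro the_equality) (auto simp: even_subsets_group_def even_part_def)
qed

lemma boolean_group_even_subsets_group: "boolean_group (even_subsets_group X)"
  unfolding boolean_group_def
proof (intro conjI ballI impI group_even_subsets_group)
  interpret group "even_subsets_group X" by (rule group_even_subsets_group)
  fix A assume A: "A \<in> carrier (even_subsets_group X)" "A \<noteq> \<one>\<^bsub>even_subsets_group X\<^esub>"
  have "A [^]\<^bsub>even_subsets_group X\<^esub> (2::nat) = \<one>\<^bsub>even_subsets_group X\<^esub>"
    using A by (simp add: numeral_2_eq_2 mult_even_subsets_group)
  then have "ord A dvd 2" using pow_eq_id A(1) by blast
  moreover have "ord A \<noteq> 1" using ord_eq_1 A by blast
  ultimately show "ord A = 2"
    using dvd_imp_le[of "ord A" 2] by (cases "ord A = 0") (auto simp: le_Suc_eq numeral_2_eq_2)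
qed

lemma norm_dist_even_subsets_group:
  "norm_dist (even_subsets_group X) N A B = N (sym_diff (even_part X A) (even_part X B))"
  by (simp add: norm_dist_def inv_even_subsets_group even_part_in_even_subsets)
    (simp add: even_subsets_group_def even_part_def)

lemma (in Metric_space) finite_separated:
  assumes "finite C" "C \<subseteq> M"
  obtains m where "0 < m" "\<And>a b. a \<in> C \<Longrightarrow> b \<in> C \<Longrightarrow> a \<noteq> b \<Longrightarrow> m \<le> d a b"
proof
  let ?D = "case_prod d ` (C \<times> C - Id)"
  have "finite ?D" using assms(1) by simp
  moreover have "0 < d a b" if "(a, b) \<in> C \<times> C - Id" for a b
    using that assms(2) by (auto simp: less_le subset_iff)
  ultimately show "0 < Min (insert 1 ?D)" by (subst Min_gr_iff) auto
  show "Min (insert 1 ?D) \<le> d a b" if "a \<in> C" "b \<in> C" "a \<noteq> b" for a b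
    using \<open>finite ?D\<close> that by (intro Min_le) auto
qed

definition pointed_pair :: "'a \<Rightarrow> 'a \<Rightarrow> 'a set" where
  "pointed_pair x0 x = sym_diff {x} {x0}"

lemma sym_diff_pointed_pair: "sym_diff (pointed_pair x0 x) (pointed_pair x0 y) = sym_diff {x} {y}"
  by (auto simp: pointed_pair_def)

locale Ultrametric_space = Metric_space +
  assumes ultra: "\<lbrakk>x \<in> M; y \<in> M; z \<in> M\<rbrakk> \<Longrightarrow> d x z \<le> max (d x y) (d y z)"

lemma Ultrametric_space_if_ultrametric_space:
  "ultrametric_space X d \<Longrightarrow> Ultrametric_space X d"
  by (simp add: ultrametric_space_def Ultrametric_space_def Ultrametric_space_axioms_def)

context Ultrametric_space
begin

lemma ball_Int_empty_or_all:
  assumes "A \<subseteq> M" "z \<in> M" and diam: "\<And>a b. a \<in> A \<Longrightarrow> b \<in> A \<Longrightarrow> d a b \<le> s"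
  shows "{a \<in> A. d z a \<le> s} = {} \<or> {a \<in> A. d z a \<le> s} = A"
proof (cases "\<exists>a0\<in>A. d z a0 \<le> s")
  case True
  then obtain a0 where a0: "a0 \<in> A" "d z a0 \<le> s" by blast
  have "d z a \<le> s" if "a \<in> A" for a
    using ultra[of z a0 a] assms(1,2) a0 diam[OF a0(1) that] that by (auto simp: subset_iff)
  then show ?thesis by blast
qed auto

definition even_in_balls :: "'a set \<Rightarrow> real \<Rightarrow> bool" where
  "even_in_balls A r \<longleftrightarrow> (\<forall>z\<in>M. even (card {a \<in> A. d z a \<le> r}))"

text \<open>In an ultrametric space the condition is monotone in the radius, since balls only merge
as it grows; quantifying over all larger radii spares us that argument.\<close>

definition even_from :: "'a set \<Rightarrow> real \<Rightarrow> bool" where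
  "even_from A r \<longleftrightarrow> 0 \<le> r \<and> (\<forall>s\<ge>r. even_in_balls A s)"

definition parity_norm :: "'a set \<Rightarrow> real" where
  "parity_norm A = Inf {r. even_from A r}"

lemma even_from_sym_diff:
  assumes "finite A" "finite B" "even_from A r" "even_from B s"
  shows "even_from (sym_diff A B) (max r s)"
  unfolding even_from_def even_in_balls_def
proof (intro conjI allI impI ballI)
  show "0 \<le> max r s" using assms(3) by (simp add: even_from_def le_max_iff_disj)
  fix t z assume t: "max r s \<le> t" and z: "z \<in> M"
  have "{a \<in> sym_diff A B. d z a \<le> t} = sym_diff {a \<in> A. d z a \<le> t} {a \<in> B. d z a \<le> t}"
    by blast
  moreover have "even (card {a \<in> A. d z a \<le> t})" "even (card {a \<in> B. d z a \<le> t})"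
    using assms(3,4) t z by (auto simp: even_from_def even_in_balls_def)
  ultimately show "even (card {a \<in> sym_diff A B. d z a \<le> t})"
    using even_card_sym_diff[of "{a \<in> A. d z a \<le> t}" "{a \<in> B. d z a \<le> t}"] assms(1,2)
    by simp
qed

lemma even_from_diameter:
  assumes A: "A \<in> even_subsets M" and "0 \<le> r"
    and diam: "\<And>a b. a \<in> A \<Longrightarrow> b \<in> A \<Longrightarrow> d a b \<le> r"
  shows "even_from A r"
  unfolding even_from_def even_in_balls_def
proof (intro conjI allI impI ballI \<open>0 \<le> r\<close>)
  fix s z assume "r \<le> s" "z \<in> M"
  have "A \<subseteq> M" using A by (simp add: even_subsets_def)
  moreover note \<open>z \<in> M\<close>
  moreover have "d a b \<le> s" if "a \<in> A" "b \<in> A" for a b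
    using diam[OF that] \<open>r \<le> s\<close> by linarith
  ultimately have "{a \<in> A. d z a \<le> s} = {} \<or> {a \<in> A. d z a \<le> s} = A"
    by (rule ball_Int_empty_or_all)
  then show "even (card {a \<in> A. d z a \<le> s})"
    using A by (metis (no_types, lifting) card.empty even_zero even_subsets_def mem_Collect_eq)
qed

lemma even_from_exists:
  assumes A: "A \<in> even_subsets M"
  shows "\<exists>r. even_from A r"
proof
  let ?r = "Max (insert 0 (case_prod d ` (A \<times> A)))"
  have "finite A" using A by (simp add: even_subsets_def)
  then show "even_from A ?r"
    by (intro even_from_diameter[OF A]) (auto intro: Max_ge)
qed

lemma bdd_below_even_from: "bdd_below {r. even_from A r}"
  by (auto simp: bdd_below_def even_from_def)

lemma parity_norm_le: "even_from A r \<Longrightarrow> parity_norm A \<le> r"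
  unfolding parity_norm_def by (rule cInf_lower) (auto simp: bdd_below_even_from)

lemma parity_norm_ge:
  "A \<in> even_subsets M \<Longrightarrow> (\<And>r. even_from A r \<Longrightarrow> m \<le> r) \<Longrightarrow> m \<le> parity_norm A"
  unfolding parity_norm_def using even_from_exists by (intro cInf_greatest) auto

lemma parity_norm_nonneg: "A \<in> even_subsets M \<Longrightarrow> 0 \<le> parity_norm A"
  by (rule parity_norm_ge) (auto simp: even_from_def)

lemma parity_norm_empty [simp]: "parity_norm {} = 0"
  using parity_norm_le[of "{}" 0] parity_norm_nonneg[of "{}"]
  by (simp add: even_from_def even_in_balls_def)

lemma parity_norm_ge_isolated:
  assumes A: "A \<in> even_subsets M" and b: "b \<in> A"
    and isolated: "\<And>a. a \<in> A \<Longrightarrow> a \<noteq> b \<Longrightarrow> m \<le> d b a"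
  shows "m \<le> parity_norm A"
proof (rule parity_norm_ge[OF A], rule ccontr)
  fix r assume r: "even_from A r" and "\<not> m \<le> r"
  have bM: "b \<in> M" using A b by (auto simp: even_subsets_def)
  have "d b b \<le> r" using bM r by (simp add: even_from_def)
  moreover have "\<not> d b a \<le> r" if "a \<in> A" "a \<noteq> b" for a
    using isolated[OF that] \<open>\<not> m \<le> r\<close> by linarith
  ultimately have "{a \<in> A. d b a \<le> r} = {b}" using b by blast
  moreover have "even (card {a \<in> A. d b a \<le> r})"
    using r bM by (simp add: even_from_def even_in_balls_def)
  ultimately show False by simp
qed

lemma parity_norm_pair:
  assumes "x \<in> M" "y \<in> M" "x \<noteq> y"
  shows "parity_norm {x, y} = d x y"
proof (rule antisym)
  have pair: "{x, y} \<in> even_subsets M" using assms by (simp add: even_subsets_def)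
  show "parity_norm {x, y} \<le> d x y"
    using assms by (intro parity_norm_le even_from_diameter[OF pair]) (auto simp: commute)
  show "d x y \<le> parity_norm {x, y}"
    by (rule parity_norm_ge_isolated[OF pair]) auto
qed

lemma parity_norm_sym_diff_le:
  assumes A: "A \<in> even_subsets M" and B: "B \<in> even_subsets M"
  shows "parity_norm (sym_diff A B) \<le> max (parity_norm A) (parity_norm B)"
proof (rule ccontr)
  assume "\<not> ?thesis"
  then have lt: "parity_norm A < parity_norm (sym_diff A B)" "parity_norm B < parity_norm (sym_diff A B)"
    by auto
  obtain r where r: "even_from A r" "r < parity_norm (sym_diff A B)"
    using lt(1) even_from_exists[OF A] cInf_less_iff[OF _ bdd_below_even_from]
    unfolding parity_norm_def by fastforce
  obtain s where s: "even_from B s" "s < parity_norm (sym_diff A B)"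
    using lt(2) even_from_exists[OF B] cInf_less_iff[OF _ bdd_below_even_from]
    unfolding parity_norm_def by fastforce
  have "even_from (sym_diff A B) (max r s)"
    using even_from_sym_diff r s A B by (auto simp: even_subsets_def)
  then show False using parity_norm_le r s by fastforce
qed

lemma parity_norm_eq_0_iff:
  assumes A: "A \<in> even_subsets M"
  shows "parity_norm A = 0 \<longleftrightarrow> A = {}"
proof
  assume "parity_norm A = 0"
  show "A = {}"
  proof (rule ccontr)
    assume "A \<noteq> {}"
    then obtain b where b: "b \<in> A" by blast
    obtain m where "0 < m" and sep: "\<And>a c. a \<in> A \<Longrightarrow> c \<in> A \<Longrightarrow> a \<noteq> c \<Longrightarrow> m \<le> d a c"
      using finite_separated A by (auto simp: even_subsets_def)
    have "m \<le> parity_norm A"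
      by (rule parity_norm_ge_isolated[OF A b]) (use sep b in blast)
    with \<open>0 < m\<close> \<open>parity_norm A = 0\<close> show False by linarith
  qed
qed simp

lemma ultra_norm_parity_norm: "ultra_norm (even_subsets_group M) parity_norm"
  unfolding ultra_norm_def
  by (simp add: comm_group_even_subsets_group parity_norm_nonneg inv_even_subsets_group
      even_part_def mult_even_subsets_group parity_norm_sym_diff_le parity_norm_eq_0_iff)

abbreviation parity_dist :: "'a set \<Rightarrow> 'a set \<Rightarrow> real" where
  "parity_dist \<equiv> norm_dist (even_subsets_group M) parity_norm"

lemma Metric_space_parity_dist: "Metric_space (even_subsets M) parity_dist"
proof
  fix A B C
  show "0 \<le> parity_dist A B"
    by (simp add: norm_dist_even_subsets_group parity_norm_nonneg sym_diff_in_even_subsets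
        even_part_in_even_subsets)
  show "parity_dist A B = parity_dist B A"
    by (simp add: norm_dist_even_subsets_group Un_commute)
  assume "A \<in> even_subsets M" "B \<in> even_subsets M"
  then show "parity_dist A B = 0 \<longleftrightarrow> A = B"
    by (auto simp: norm_dist_even_subsets_group even_part_def parity_norm_eq_0_iff
        sym_diff_in_even_subsets)
next
  fix A B C assume ABC: "A \<in> even_subsets M" "B \<in> even_subsets M" "C \<in> even_subsets M"
  have "sym_diff A C = sym_diff (sym_diff A B) (sym_diff B C)" by blast
  then have "parity_norm (sym_diff A C)
      \<le> max (parity_norm (sym_diff A B)) (parity_norm (sym_diff B C))"
    using parity_norm_sym_diff_le sym_diff_in_even_subsets ABC by metis
  also have "\<dots> \<le> parity_norm (sym_diff A B) + parity_norm (sym_diff B C)"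
    using parity_norm_nonneg[OF sym_diff_in_even_subsets[OF ABC(1,2)]]
      parity_norm_nonneg[OF sym_diff_in_even_subsets[OF ABC(2,3)]] by simp
  finally show "parity_dist A C \<le> parity_dist A B + parity_dist B C"
    using ABC by (simp add: norm_dist_even_subsets_group even_part_def)
qed

lemma pointed_pair_in_even_subsets: "x0 \<in> M \<Longrightarrow> x \<in> M \<Longrightarrow> pointed_pair x0 x \<in> even_subsets M"
  by (cases "x = x0") (auto simp: pointed_pair_def even_subsets_def insert_Diff_if)

lemma parity_dist_pointed_pair:
  assumes "x0 \<in> M" "x \<in> M" "y \<in> M"
  shows "parity_dist (pointed_pair x0 x) (pointed_pair x0 y) = d x y"
proof (cases "x = y")
  case True
  then show ?thesis using assms by (simp add: norm_dist_even_subsets_group)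
next
  case False
  then have "sym_diff {x} {y} = {x, y}" by auto
  then show ?thesis
    using assms False pointed_pair_in_even_subsets
    by (simp add: norm_dist_even_subsets_group even_part_def sym_diff_pointed_pair parity_norm_pair)
qed

lemma parity_norm_sym_diff_singleton_ge:
  assumes C: "finite C" "C \<subseteq> M" and c: "c1 \<in> C" "c2 \<in> C" "c1 \<noteq> c2"
    and sep: "\<And>a b. a \<in> C \<Longrightarrow> b \<in> C \<Longrightarrow> a \<noteq> b \<Longrightarrow> m \<le> d a b"
    and x: "x \<in> M" and even: "sym_diff C {x} \<in> even_subsets M"
  shows "m \<le> parity_norm (sym_diff C {x})"
proof (cases "x \<in> C")
  case True
  obtain b where b: "b \<in> C" "b \<noteq> x" using c by metis
  show ?thesis
    by (rule parity_norm_ge_isolated[OF even]) (use b sep True in auto)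
next
  case False
  text \<open>Two points of C closer than m to x would be closer than m to each other.\<close>
  have "\<exists>b\<in>C. m \<le> d b x"
  proof (rule ccontr)
    assume "\<not> ?thesis"
    then have "d c1 x < m" "d x c2 < m" using c by (auto simp: commute)
    moreover have "d c1 c2 \<le> max (d c1 x) (d x c2)"
      using ultra C(2) c x by auto
    ultimately show False using sep[OF c] by linarith
  qed
  then obtain b where b: "b \<in> C" "m \<le> d b x" by blast
  show ?thesis
    by (rule parity_norm_ge_isolated[OF even, of b]) (use b sep False in auto)
qed

lemma sym_diff_base_point_two_points:
  assumes x0: "x0 \<in> M" and A: "A \<in> even_subsets M" "A \<notin> pointed_pair x0 ` M"
  obtains c1 c2 where "c1 \<in> sym_diff A {x0}" "c2 \<in> sym_diff A {x0}" "c1 \<noteq> c2"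
proof -
  have not_subsingleton: "\<not> sym_diff A {x0} \<subseteq> {c}" for c
  proof
    assume "sym_diff A {x0} \<subseteq> {c}"
    then consider "sym_diff A {x0} = {}" | "sym_diff A {x0} = {c}" by blast
    then show False
    proof cases
      case 1
      then have "A = {x0}" by blast
      then show False using A(1) by (simp add: even_subsets_def)
    next
      case 2
      then have "A = pointed_pair x0 c" "c \<in> M"
        using A(1) x0 by (auto simp: pointed_pair_def even_subsets_def)
      then show False using A(2) by blast
    qed
  qed
  then show ?thesis using that by blast
qed

lemma closedin_pointed_pair_image:
  assumes x0: "x0 \<in> M"
  shows "closedin (Metric_space.mtopology (even_subsets M) parity_dist) (pointed_pair x0 ` M)"
proof -
  interpret P: Metric_space "even_subsets M" parity_dist by (rule Metric_space_parity_dist)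
  have "\<exists>r>0. disjnt (pointed_pair x0 ` M) (P.mball A r)"
    if A: "A \<in> even_subsets M" "A \<notin> pointed_pair x0 ` M" for A
  proof -
    define C where "C = sym_diff A {x0}"
    have C: "finite C" "C \<subseteq> M" using A x0 by (auto simp: C_def even_subsets_def)
    obtain c1 c2 where c: "c1 \<in> C" "c2 \<in> C" "c1 \<noteq> c2"
      using sym_diff_base_point_two_points[OF x0 A] unfolding C_def by blast
    obtain m where m: "0 < m" "\<And>a b. a \<in> C \<Longrightarrow> b \<in> C \<Longrightarrow> a \<noteq> b \<Longrightarrow> m \<le> d a b"
      using finite_separated[OF C] by blast
    have "m \<le> parity_dist A (pointed_pair x0 x)" if x: "x \<in> M" for x
    proof -
      have "sym_diff A (pointed_pair x0 x) = sym_diff C {x}"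
        by (auto simp: C_def pointed_pair_def)
      moreover have "sym_diff A (pointed_pair x0 x) \<in> even_subsets M"
        using A(1) pointed_pair_in_even_subsets[OF x0 x] by (rule sym_diff_in_even_subsets)
      ultimately show ?thesis
        using parity_norm_sym_diff_singleton_ge[OF C c m(2) x] A(1) pointed_pair_in_even_subsets[OF x0 x]
        by (simp add: norm_dist_even_subsets_group even_part_def)
    qed
    then have "disjnt (pointed_pair x0 ` M) (P.mball A m)"
      by (auto simp: disjnt_iff not_less)
    with m(1) show ?thesis by blast
  qed
  then show ?thesis
    unfolding P.closedin_metric using pointed_pair_in_even_subsets[OF x0] by blast
qed

end

theorem corollary8p4:
  fixes X :: "'a set" and d :: "'a \<Rightarrow> 'a \<Rightarrow> real"
  assumes "ultrametric_space X d"
  shows "\<exists>(G :: 'a set monoid) N f.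
           boolean_group G \<and> ultra_norm G N \<and>
           f \<in> X \<rightarrow> carrier G \<and>
           (\<forall>x\<in>X. \<forall>y\<in>X. norm_dist G N (f x) (f y) = d x y) \<and>
           closedin (Metric_space.mtopology (carrier G) (norm_dist G N)) (f ` X)"
proof -
  interpret Ultrametric_space X d
    by (rule Ultrametric_space_if_ultrametric_space[OF assms])
  note group = boolean_group_even_subsets_group ultra_norm_parity_norm
  show ?thesis
  proof (cases "X = {}")
    case True
    then show ?thesis
      using group by (intro exI[of _ "even_subsets_group X"] exI[of _ parity_norm]) simp
  next
    case False
    then obtain x0 where "x0 \<in> X" by blast
    then show ?thesis
      using group pointed_pair_in_even_subsets parity_dist_pointed_pair closedin_pointed_pair_image
      by (intro exI[of _ "even_subsets_group X"] exI[of _ parity_norm] exI[of _ "pointed_pair x0"])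
        auto
  qed
qed

end
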